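(* There is an absolute constant $C$ such that for every odd positive integer $d$ and every $\tau\in[0,d^{1/6}]$ (possibly depending on $d$), $$\int_0^\tau\frac{|H_d(t)|}{t}\,dt\le C\,d^{1/4}\,\tau\,e^{\tau^2/4}.$$
   Context: The Hermite polynomials $(H_k)_{k\ge0}$ are the orthonormal polynomials for $\mathcal{N}(0,1)$ with $\deg H_k=k$ and positive leading coefficient (the probabilist's Hermite polynomials divided by $\sqrt{k!}$). *)

theory Defs
  imports "HOL-Analysis.Analysis"
begin

fun hermite_prob :: "nat \<Rightarrow> real \<Rightarrow> real" where
  "hermite_prob 0 x = 1"
| "hermite_prob (Suc 0) x = x"
| "hermite_prob (Suc (Suc k)) x = x * hermite_prob (Suc k) x - real (Suc k) * hermite_prob k x"

text \<open>Orthonormal Hermite polynomials for N(0,1): H_k = He_k / sqrt(k!).\<close>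
definition hermite :: "nat \<Rightarrow> real \<Rightarrow> real" where
  "hermite k x = hermite_prob k x / sqrt (fact k)"

end

theory Submission
  imports Defs
begin

text \<open>The weighted function D(x) = exp(-x^2/4) He_d(x) (Weber's parabolic cylinder function)
  solves D'' = -(d + 1/2 - x^2/4) D. For such an equation the Sonin energy q D^2 + D'^2 does
  not increase while the coefficient q decreases, so as long as q \<ge> 0 the slope D' is bounded by
  its value at 0. For odd d we have D(0) = 0, hence |D(t)| \<le> t |D'(0)| = t d |He_{d-1}(0)|, and
  a Wallis-type estimate of the central values He_{d-1}(0)^2/(d-1)! gives
  |H_d(t)| \<le> d^(1/4) t exp(t^2/4) whenever t^2 \<le> 4d + 2. For \<tau> \<le> d^(1/6) this bounds the
  integrand by d^(1/4) exp(\<tau>^2/4), so the theorem holds with C = 1.\<close>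

lemma sonin_energy_le:
  fixes u v q q' :: "real \<Rightarrow> real"
  assumes "a \<le> b"
    and u': "\<And>x. a \<le> x \<Longrightarrow> x \<le> b \<Longrightarrow> (u has_real_derivative v x) (at x)"
    and v': "\<And>x. a \<le> x \<Longrightarrow> x \<le> b \<Longrightarrow> (v has_real_derivative - q x * u x) (at x)"
    and q': "\<And>x. a \<le> x \<Longrightarrow> x \<le> b \<Longrightarrow> (q has_real_derivative q' x) (at x)"
    and q'_nonpos: "\<And>x. a \<le> x \<Longrightarrow> x \<le> b \<Longrightarrow> q' x \<le> 0"
  shows "q b * (u b)^2 + (v b)^2 \<le> q a * (u a)^2 + (v a)^2"
proof (rule DERIV_nonpos_imp_nonincreasing[OF \<open>a \<le> b\<close>])
  fix x assume x: "a \<le> x" "x \<le> b"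
  have "((\<lambda>x. q x * (u x)^2 + (v x)^2) has_real_derivative q' x * (u x)^2) (at x)"
    by (rule derivative_eq_intros u'[OF x] v'[OF x] q'[OF x] refl)+ (simp add: algebra_simps)
  then show "\<exists>y. ((\<lambda>x. q x * (u x)^2 + (v x)^2) has_real_derivative y) (at x) \<and> y \<le> 0"
    using q'_nonpos[OF x] by (intro exI[of _ "q' x * (u x)^2"] conjI mult_nonpos_nonneg) auto
qed

lemma sonin_bound:
  fixes u v q q' :: "real \<Rightarrow> real"
  assumes "a \<le> b"
    and u': "\<And>x. a \<le> x \<Longrightarrow> x \<le> b \<Longrightarrow> (u has_real_derivative v x) (at x)"
    and v': "\<And>x. a \<le> x \<Longrightarrow> x \<le> b \<Longrightarrow> (v has_real_derivative - q x * u x) (at x)"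
    and q': "\<And>x. a \<le> x \<Longrightarrow> x \<le> b \<Longrightarrow> (q has_real_derivative q' x) (at x)"
    and q'_nonpos: "\<And>x. a \<le> x \<Longrightarrow> x \<le> b \<Longrightarrow> q' x \<le> 0"
    and q_nonneg: "\<And>x. a \<le> x \<Longrightarrow> x \<le> b \<Longrightarrow> 0 \<le> q x"
    and "u a = 0"
  shows "\<bar>u b\<bar> \<le> (b - a) * \<bar>v a\<bar>"
proof (cases "a = b")
  case True
  then show ?thesis using \<open>u a = 0\<close> by simp
next
  case False
  then obtain \<xi> where \<xi>: "a < \<xi>" "\<xi> < b" and mvt: "u b - u a = (b - a) * v \<xi>"
    using MVT2[of a b u v] u' \<open>a \<le> b\<close> by force
  have "(v \<xi>)^2 \<le> q \<xi> * (u \<xi>)^2 + (v \<xi>)^2"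
    using q_nonneg[of \<xi>] \<xi> by simp
  also have "\<dots> \<le> (v a)^2"
    using sonin_energy_le[of a \<xi> u v q q'] assms \<xi> \<open>u a = 0\<close> by simp
  finally have "\<bar>v \<xi>\<bar> \<le> \<bar>v a\<bar>"
    using abs_le_square_iff by blast
  then show ?thesis
    using mvt \<open>u a = 0\<close> \<open>a \<le> b\<close> by (simp add: abs_mult mult_left_mono)
qed

lemma hermite_prob_Suc:
  "hermite_prob (Suc n) x = x * hermite_prob n x - real n * hermite_prob (n - 1) x"
  by (cases n) auto

lemma hermite_prob_has_real_derivative:
  "(hermite_prob n has_real_derivative real n * hermite_prob (n - 1) x) (at x)"
proof (induction n x rule: hermite_prob.induct)
  case (3 k x)
  have "hermite_prob (Suc (Suc k)) =
      (\<lambda>x. x * hermite_prob (Suc k) x - real (Suc k) * hermite_prob k x)"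
    by auto
  moreover have "((\<lambda>x. x * hermite_prob (Suc k) x - real (Suc k) * hermite_prob k x)
      has_real_derivative real (Suc (Suc k)) * hermite_prob (Suc k) x) (at x)"
    by (rule derivative_eq_intros 3[simplified] refl)+
      (simp add: hermite_prob_Suc[of k x] algebra_simps)
  ultimately show ?case by simp
qed simp_all

lemma hermite_prob_deriv_has_real_derivative:
  "((\<lambda>x. real n * hermite_prob (n - 1) x) has_real_derivative
     x * (real n * hermite_prob (n - 1) x) - real n * hermite_prob n x) (at x)"
proof (cases n)
  case (Suc k)
  have "real k * hermite_prob (k - 1) x = x * hermite_prob k x - hermite_prob (Suc k) x"
    using hermite_prob_Suc[of k x] by simp
  then show ?thesis
    unfolding Suc diff_Suc_1
    by (intro DERIV_cong[OF DERIV_cmult[OF hermite_prob_has_real_derivative]])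
      (simp only: mult.assoc, simp add: algebra_simps)
qed simp

definition parabolic_cylinder :: "nat \<Rightarrow> real \<Rightarrow> real" where
  "parabolic_cylinder n x = exp (-(x^2) / 4) * hermite_prob n x"

definition parabolic_cylinder_deriv :: "nat \<Rightarrow> real \<Rightarrow> real" where
  "parabolic_cylinder_deriv n x =
     exp (-(x^2) / 4) * (real n * hermite_prob (n - 1) x - x * hermite_prob n x / 2)"

lemma parabolic_cylinder_has_real_derivative:
  "(parabolic_cylinder n has_real_derivative parabolic_cylinder_deriv n x) (at x)"
  unfolding parabolic_cylinder_def[abs_def] parabolic_cylinder_deriv_def
  using hermite_prob_has_real_derivative[of n x]
  by (auto intro!: derivative_eq_intros simp: algebra_simps)

lemma parabolic_cylinder_deriv_has_real_derivative:
  "(parabolic_cylinder_deriv n has_real_derivative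
     - (real n + 1/2 - x^2 / 4) * parabolic_cylinder n x) (at x)"
proof -
  have gauss: "((\<lambda>x. exp (-(x^2) / 4)) has_real_derivative - (x / 2) * exp (-(x^2) / 4)) (at x)"
    by (auto intro!: derivative_eq_intros)
  have poly: "((\<lambda>x. real n * hermite_prob (n - 1) x - x * hermite_prob n x / 2) has_real_derivative
      (x * (real n * hermite_prob (n - 1) x) - real n * hermite_prob n x)
      - (1 * hermite_prob n x + real n * hermite_prob (n - 1) x * x) / 2) (at x)"
    by (intro DERIV_diff DERIV_cdivide DERIV_mult DERIV_ident hermite_prob_has_real_derivative
        hermite_prob_deriv_has_real_derivative)
  show ?thesis
    unfolding parabolic_cylinder_def parabolic_cylinder_deriv_def[abs_def]
    by (rule DERIV_cong[OF DERIV_mult[OF gauss poly]]) (simp add: algebra_simps power2_eq_square)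
qed

lemma abs_parabolic_cylinder_le:
  assumes "hermite_prob n 0 = 0" and "0 \<le> t" and "t^2 \<le> 4 * real n + 2"
  shows "\<bar>parabolic_cylinder n t\<bar> \<le> t * \<bar>real n * hermite_prob (n - 1) 0\<bar>"
proof -
  have "0 \<le> real n + 1/2 - x^2 / 4" if "0 \<le> x" "x \<le> t" for x
  proof -
    have "x^2 \<le> t^2" using that by (intro power_mono) auto
    then show ?thesis using assms(3) by simp
  qed
  then have "\<bar>parabolic_cylinder n t\<bar> \<le> (t - 0) * \<bar>parabolic_cylinder_deriv n 0\<bar>"
    using assms(1,2)
    by (intro sonin_bound[where q = "\<lambda>x. real n + 1/2 - x^2 / 4" and q' = "\<lambda>x. - x / 2"]
        parabolic_cylinder_has_real_derivative parabolic_cylinder_deriv_has_real_derivative)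
      (auto intro!: derivative_eq_intros simp: parabolic_cylinder_def)
  then show ?thesis by (simp add: parabolic_cylinder_deriv_def)
qed

lemma hermite_prob_odd_zero: "hermite_prob (2 * k + 1) 0 = 0"
proof (induction k)
  case (Suc k)
  have "2 * Suc k + 1 = Suc (Suc (2 * k + 1))" by simp
  then show ?case using Suc by (simp del: mult_Suc_right)
qed simp

lemma hermite_Suc_Suc_zero_sq:
  "(hermite (Suc (Suc n)) 0)^2 = real (n + 1) / real (n + 2) * (hermite n 0)^2"
proof -
  have hermite_sq: "(hermite m 0)^2 = (hermite_prob m 0)^2 / fact m" for m
    by (simp add: hermite_def power_divide)
  define r where "r = real (n + 1)"
  have "r > 0" "real (n + 2) = r + 1"
    by (simp_all add: r_def)
  have rec: "hermite_prob (Suc (Suc n)) 0 = - r * hermite_prob n 0"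
    by (simp add: r_def algebra_simps)
  have fact_rec: "fact (Suc (Suc n)) = (r + 1) * (r * fact n)"
    by (simp add: r_def algebra_simps)
  have "(hermite (Suc (Suc n)) 0)^2 = (- r * hermite_prob n 0)^2 / ((r + 1) * (r * fact n))"
    unfolding hermite_sq rec fact_rec ..
  also have "\<dots> = (r * (r * (hermite_prob n 0)^2)) / (r * ((r + 1) * fact n))"
    by (simp add: power_mult_distrib power2_eq_square mult_ac)
  also have "\<dots> = r / (r + 1) * ((hermite_prob n 0)^2 / fact n)"
    using \<open>r > 0\<close> by simp
  finally show ?thesis
    unfolding hermite_sq \<open>real (n + 2) = r + 1\<close> r_def[symmetric] .
qed

lemma hermite_even_zero_sq_bound: "((hermite (2 * k) 0)^2)^2 * real (2 * k + 1) \<le> 1"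
proof (induction k)
  case (Suc k)
  define h where "h = (hermite (2 * k) 0)^2"
  have h_step: "(hermite (2 * Suc k) 0)^2 = real (2 * k + 1) / real (2 * k + 2) * h"
    using hermite_Suc_Suc_zero_sq[of "2 * k"] by (simp add: h_def)
  have wallis: "real (2 * k + 1) * real (2 * k + 3) \<le> (real (2 * k + 2))^2"
    by (simp add: power2_eq_square algebra_simps)
  have "((hermite (2 * Suc k) 0)^2)^2 * real (2 * Suc k + 1)
      = h^2 * real (2 * k + 1) * (real (2 * k + 1) * real (2 * k + 3) / (real (2 * k + 2))^2)"
    unfolding h_step by (simp add: power_mult_distrib power_divide field_simps power2_eq_square)
  also have "\<dots> \<le> 1 * 1"
    using Suc.IH wallis by (intro mult_mono) (simp_all add: h_def)
  finally show ?case by simp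
qed (simp add: hermite_def)

lemma abs_hermite_odd_le:
  assumes "odd d" and "0 \<le> t" and "t^2 \<le> 4 * real d + 2"
  shows "\<bar>hermite d t\<bar> \<le> real d powr (1/4) * t * exp (t^2 / 4)"
proof -
  obtain k where k: "d = 2 * k + 1" using \<open>odd d\<close> oddE by blast
  let ?h = "hermite (2 * k) 0"
  have d_pos: "real d > 0" using k by simp
  have "\<bar>real d * hermite_prob (2 * k) 0\<bar> / sqrt (fact d)
      = real d * sqrt (fact (2 * k)) * \<bar>?h\<bar> / (sqrt (real d) * sqrt (fact (2 * k)))"
    using k by (simp add: hermite_def abs_mult real_sqrt_mult)
  also have "\<dots> = real d / sqrt (real d) * \<bar>?h\<bar>"
    by simp
  also have "\<dots> = sqrt (real d) * \<bar>?h\<bar>"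
    by (simp add: real_div_sqrt)
  finally have central_value: "\<bar>real d * hermite_prob (2 * k) 0\<bar> / sqrt (fact d) = sqrt (real d) * \<bar>?h\<bar>" .
  have "sqrt (real d) * \<bar>?h\<bar> \<le> real d powr (1/4)"
  proof -
    have "real d * ?h^2 \<le> sqrt (real d)"
    proof (rule real_le_rsqrt)
      show "(real d * ?h^2)^2 \<le> real d"
        using mult_left_mono[OF hermite_even_zero_sq_bound[of k], of "real d"] k
        by (simp add: power_mult_distrib power2_eq_square mult_ac)
    qed
    then have "sqrt (real d * ?h^2) \<le> sqrt (sqrt (real d))"
      by simp
    also have "sqrt (sqrt (real d)) = real d powr (1/4)"
      by (simp add: powr_half_sqrt[symmetric] powr_powr)
    finally show ?thesis
      by (simp add: real_sqrt_mult)
  qed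
  have "\<bar>hermite d t\<bar> = exp (t^2 / 4) * \<bar>parabolic_cylinder d t\<bar> / sqrt (fact d)"
    by (simp add: hermite_def parabolic_cylinder_def abs_mult exp_minus field_simps)
  also have "\<dots> \<le> exp (t^2 / 4) * (t * \<bar>real d * hermite_prob (2 * k) 0\<bar>) / sqrt (fact d)"
    using abs_parabolic_cylinder_le[of d t] assms k hermite_prob_odd_zero[of k]
    by (intro divide_right_mono mult_left_mono) auto
  also have "\<dots> = exp (t^2 / 4) * t * (sqrt (real d) * \<bar>?h\<bar>)"
    by (simp flip: central_value)
  also have "\<dots> \<le> exp (t^2 / 4) * t * real d powr (1/4)"
    using \<open>sqrt (real d) * \<bar>?h\<bar> \<le> _\<close> \<open>0 \<le> t\<close> by (intro mult_left_mono) auto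
  finally show ?thesis
    by (simp add: mult_ac)
qed

lemma integral_le_const_bound:
  fixes f :: "real \<Rightarrow> real"
  assumes "a \<le> b" and "0 \<le> B" and "\<And>t. t \<in> {a..b} \<Longrightarrow> f t \<le> B"
  shows "integral {a..b} f \<le> B * (b - a)"
proof (cases "f integrable_on {a..b}")
  case True
  then have "integral {a..b} f \<le> integral {a..b} (\<lambda>_. B)"
    by (intro integral_le) (auto simp: assms(3))
  then show ?thesis using \<open>a \<le> b\<close> by (simp add: mult.commute)
next
  case False
  then show ?thesis using assms(1,2) by (simp add: not_integrable_integral)
qed

theorem lemmaA10:
  shows "\<exists>C::real. \<forall>(d::nat) (tau::real). odd d \<longrightarrow> 0 \<le> tau \<longrightarrow> tau \<le> real d powr (1/6) \<longrightarrow>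
           integral {0..tau} (\<lambda>t. \<bar>hermite d t\<bar> / t) \<le> C * real d powr (1/4) * tau * exp (tau^2 / 4)"
proof (intro exI[of _ 1] allI impI)
  fix d :: nat and tau :: real
  assume d: "odd d" and "0 \<le> tau" and "tau \<le> real d powr (1/6)"
  have "real d \<ge> 1" using d by (cases d) auto
  have "tau^2 \<le> (real d powr (1/6))^2"
    using \<open>0 \<le> tau\<close> \<open>tau \<le> _\<close> by (intro power_mono) auto
  also have "\<dots> \<le> real d"
    using \<open>real d \<ge> 1\<close> powr_mono[of "1/3" 1 "real d"] by (simp add: powr_power)
  finally have tau_sq: "tau^2 \<le> real d" .
  have "\<bar>hermite d t\<bar> / t \<le> real d powr (1/4) * exp (tau^2 / 4)" if t: "t \<in> {0..tau}" for t
  proof -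
    have "t^2 \<le> tau^2" using t by (intro power_mono) auto
    then have "\<bar>hermite d t\<bar> \<le> real d powr (1/4) * t * exp (t^2 / 4)"
      using abs_hermite_odd_le[OF d, of t] t tau_sq by simp
    also have "\<dots> \<le> t * (real d powr (1/4) * exp (tau^2 / 4))"
      using mult_left_mono[of "exp (t^2 / 4)" "exp (tau^2 / 4)" "t * real d powr (1/4)"]
        \<open>t^2 \<le> tau^2\<close> t by (simp add: mult_ac)
    finally show ?thesis
      using t by (cases "t = 0") (auto simp: divide_le_eq mult.commute)
  qed
  then show "integral {0..tau} (\<lambda>t. \<bar>hermite d t\<bar> / t) \<le> 1 * real d powr (1/4) * tau * exp (tau^2 / 4)"
    using integral_le_const_bound[of 0 tau "real d powr (1/4) * exp (tau^2 / 4)" "\<lambda>t. \<bar>hermite d t\<bar> / t"] \<open>0 \<le> tau\<close>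
    by (simp add: mult_ac)
qed

end
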